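(* Let $M>0$ and $q,Q,g\in\mathbb{R}$, let $\mathbf{n}\in\mathbb{R}^3$ be a constant vector, and on $\{(\mathbf{x},\boldsymbol{\Pi}):\mathbf{x}\in\mathbb{R}^3\setminus\{0\},\ \boldsymbol{\Pi}\in\mathbb{R}^3\}$ consider the bracket $$\{P,R\}=\sum_i\Big(\frac{\partial P}{\partial x^i}\frac{\partial R}{\partial \Pi_i}-\frac{\partial P}{\partial \Pi_i}\frac{\partial R}{\partial x^i}\Big)+q\sum_{i,j}F_{ij}\frac{\partial P}{\partial \Pi_i}\frac{\partial R}{\partial \Pi_j},\qquad F_{ij}=\epsilon_{ijk}B^k,$$ where $\mathbf{B}(\mathbf{x})=\dfrac{g}{r^{5/2}}\,\mathbf{x}$, $r=|\mathbf{x}|$. Let $$H=\frac{\boldsymbol{\Pi}^2}{2M}+\frac{qQ}{r},\qquad \mathbf{L}=\mathbf{x}\times\boldsymbol{\Pi},\qquad \mathbf{K}_2=\boldsymbol{\Pi}\times\mathbf{L}+MqQ\,\frac{\mathbf{x}}{r}.$$ Then the function $$K=\mathbf{n}\cdot\Big(\mathbf{K}_2+\frac{2gq}{r^{1/2}}\,\mathbf{L}-2g^2q^2\,\frac{\mathbf{x}}{r}\Big)$$ satisfies $\{K,H\}=0$ identically.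
   Context: $\epsilon_{ijk}$ is the Levi-Civita symbol and indices are raised and lowered with the Euclidean metric $\delta_{ij}$. The variables $\Pi_i$ are the gauge-covariant (kinetic) momenta and the bracket above is the gauge-covariant Poisson bracket, in which the $\Pi_i$ are not canonical ($\{\Pi_i,\Pi_j\}=qF_{ij}$). This models a charge $q$ of mass $M$ moving in the Coulomb potential of a charge $Q$ superposed with the spherically symmetric magnetic field $\mathbf{B}$. *)

theory Defs
  imports "HOL-Analysis.Analysis"
begin

text \<open>Phase space points: position x :: real^3 (x \<noteq> 0) and kinetic momentum p :: real^3.
  Observables are functions real^3 \<Rightarrow> real^3 \<Rightarrow> real.\<close>

definition levi_civita :: "3 \<Rightarrow> 3 \<Rightarrow> 3 \<Rightarrow> real" where
  "levi_civita i j k =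
     (if (i, j, k) \<in> {(1, 2, 3), (2, 3, 1), (3, 1, 2)} then 1
      else if (i, j, k) \<in> {(1, 3, 2), (3, 2, 1), (2, 1, 3)} then -1
      else 0)"

definition dx :: "(real^3 \<Rightarrow> real^3 \<Rightarrow> real) \<Rightarrow> 3 \<Rightarrow> real^3 \<Rightarrow> real^3 \<Rightarrow> real" where
  "dx P i x p = deriv (\<lambda>t. P (x + t *\<^sub>R axis i 1) p) 0"

definition dp :: "(real^3 \<Rightarrow> real^3 \<Rightarrow> real) \<Rightarrow> 3 \<Rightarrow> real^3 \<Rightarrow> real^3 \<Rightarrow> real" where
  "dp P i x p = deriv (\<lambda>t. P x (p + t *\<^sub>R axis i 1)) 0"

definition Bfield :: "real \<Rightarrow> real^3 \<Rightarrow> real^3" where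
  "Bfield g x = (g / norm x powr (5/2)) *\<^sub>R x"

definition Ften :: "real \<Rightarrow> real^3 \<Rightarrow> 3 \<Rightarrow> 3 \<Rightarrow> real" where
  "Ften g x i j = (\<Sum>k\<in>UNIV. levi_civita i j k * Bfield g x $ k)"

definition pbracket :: "real \<Rightarrow> real \<Rightarrow> (real^3 \<Rightarrow> real^3 \<Rightarrow> real) \<Rightarrow> (real^3 \<Rightarrow> real^3 \<Rightarrow> real)
    \<Rightarrow> real^3 \<Rightarrow> real^3 \<Rightarrow> real" where
  "pbracket q g P R x p =
     (\<Sum>i\<in>UNIV. dx P i x p * dp R i x p - dp P i x p * dx R i x p)
     + q * (\<Sum>i\<in>UNIV. \<Sum>j\<in>UNIV. Ften g x i j * dp P i x p * dp R j x p)"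

definition Ham :: "real \<Rightarrow> real \<Rightarrow> real \<Rightarrow> real^3 \<Rightarrow> real^3 \<Rightarrow> real" where
  "Ham M q Q x p = (p \<bullet> p) / (2 * M) + q * Q / norm x"

definition Lmom :: "real^3 \<Rightarrow> real^3 \<Rightarrow> real^3" where
  "Lmom x p = cross3 x p"

definition K2vec :: "real \<Rightarrow> real \<Rightarrow> real \<Rightarrow> real^3 \<Rightarrow> real^3 \<Rightarrow> real^3" where
  "K2vec M q Q x p = cross3 p (Lmom x p) + (M * q * Q / norm x) *\<^sub>R x"

definition Kfun :: "real \<Rightarrow> real \<Rightarrow> real \<Rightarrow> real \<Rightarrow> real^3 \<Rightarrow> real^3 \<Rightarrow> real^3 \<Rightarrow> real" where
  "Kfun M q Q g n x p =
     n \<bullet> (K2vec M q Q x p + (2 * g * q / norm x powr (1/2)) *\<^sub>R Lmom x p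
           - (2 * g^2 * q^2 / norm x) *\<^sub>R x)"

end

theory Submission
  imports Defs
begin

(* The bracket {K,H} is a first-order differential expression, so it is determined by the
   Frechet gradients of K and H in the position and in the momentum variable.

   1. If an observable has a gradient G (a Frechet derivative h \<mapsto> G \<bullet> h), its partial
      derivatives are the components of G, and the bracket becomes the vector expression
      \<nabla>\<^sub>xP \<bullet> \<nabla>\<^sub>\<Pi>R - \<nabla>\<^sub>\<Pi>P \<bullet> \<nabla>\<^sub>xR + q B \<bullet> (\<nabla>\<^sub>\<Pi>P \<times> \<nabla>\<^sub>\<Pi>R).
   2. Every radial factor occurring in H and K is a power |x|^e, whose gradient is
      e |x|^(e-2) x; with BAC-CAB the observables H and K become sums of such powers times
      inner products, so their gradients follow from the product rule.
   3. Substituting the gradients and simplifying with the triple-product identities leaves a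
      scalar expression in n\<bullet>p, n\<bullet>x, x\<bullet>p, n\<bullet>(x\<times>p) and powers of sqrt|x|, in which the
      Coulomb terms (MqQ), the mixed terms (gq) and the terms in g^2 q^2 cancel separately. *)

lemma deriv_along_line:
  fixes a v G :: "'a::real_inner"
  assumes "(f has_derivative (\<lambda>h. G \<bullet> h)) (at a)"
  shows "deriv (\<lambda>t. f (a + t *\<^sub>R v)) 0 = G \<bullet> v"
proof -
  have line: "((\<lambda>t::real. a + t *\<^sub>R v) has_derivative (\<lambda>t. t *\<^sub>R v)) (at 0)"
    by (auto intro!: derivative_eq_intros)
  have "((\<lambda>t. f (a + t *\<^sub>R v)) has_derivative (\<lambda>t. G \<bullet> (t *\<^sub>R v))) (at 0)"
    using has_derivative_compose[OF line, of f "\<lambda>h. G \<bullet> h"] assms by simp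
  then have "((\<lambda>t. f (a + t *\<^sub>R v)) has_real_derivative G \<bullet> v) (at 0)"
    unfolding has_field_derivative_def
    by (rule has_derivative_eq_rhs) (simp add: fun_eq_iff)
  then show ?thesis
    by (rule DERIV_imp_deriv)
qed

lemma dx_from_gradient:
  assumes "((\<lambda>y. P y p) has_derivative (\<lambda>h. G \<bullet> h)) (at x)"
  shows "dx P i x p = G $ i"
  unfolding dx_def deriv_along_line[OF assms] by (simp add: inner_axis)

lemma dp_from_gradient:
  assumes "((\<lambda>u. P x u) has_derivative (\<lambda>h. G \<bullet> h)) (at p)"
  shows "dp P i x p = G $ i"
  unfolding dp_def deriv_along_line[OF assms] by (simp add: inner_axis)

(* Coordinate-free form of the gauge-covariant bracket: the magnetic term
   q \<Sum>\<^sub>i\<^sub>j F\<^sub>i\<^sub>j a\<^sub>i b\<^sub>j with F\<^sub>i\<^sub>j = \<epsilon>\<^sub>i\<^sub>j\<^sub>k B\<^sup>k is the triple product q B \<bullet> (a \<times> b). *)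
lemma pbracket_from_gradients:
  assumes "((\<lambda>y. P y p) has_derivative (\<lambda>h. Px \<bullet> h)) (at x)"
    and "((\<lambda>u. P x u) has_derivative (\<lambda>h. Pp \<bullet> h)) (at p)"
    and "((\<lambda>y. R y p) has_derivative (\<lambda>h. Rx \<bullet> h)) (at x)"
    and "((\<lambda>u. R x u) has_derivative (\<lambda>h. Rp \<bullet> h)) (at p)"
  shows "pbracket q g P R x p = Px \<bullet> Rp - Pp \<bullet> Rx + q * (Bfield g x \<bullet> cross3 Pp Rp)"
  unfolding pbracket_def Ften_def
  by (simp add: dx_from_gradient[where P = P, OF assms(1)] dp_from_gradient[where P = P, OF assms(2)]
      dx_from_gradient[where P = R, OF assms(3)] dp_from_gradient[where P = R, OF assms(4)]
      sum_3 inner_vec_def levi_civita_def cross_components algebra_simps)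

lemma has_derivative_norm_powr:
  fixes x :: "'a::real_inner"
  assumes "x \<noteq> 0"
  shows "((\<lambda>y. norm y powr e) has_derivative (\<lambda>h. e * norm x powr (e - 2) * (x \<bullet> h))) (at x)"
proof -
  have "((\<lambda>y. norm y powr e) has_derivative
          (\<lambda>h. norm x powr e * (0 * ln (norm x) + (sgn x \<bullet> h) * e / norm x))) (at x)"
    using has_derivative_powr[OF has_derivative_norm[OF assms] has_derivative_const] assms
    by (simp add: inner_commute)
  moreover have "norm x powr e * (0 * ln (norm x) + (sgn x \<bullet> h) * e / norm x)
      = e * norm x powr (e - 2) * (x \<bullet> h)" for h
    using assms by (simp add: sgn_div_norm powr_diff power2_eq_square field_simps)
  ultimately show ?thesis by simp
qed

lemma has_derivative_inner_norm_powr: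
  fixes x a :: "'a::real_inner"
  assumes "x \<noteq> 0"
  shows "((\<lambda>y. (a \<bullet> y) * norm y powr e) has_derivative
           (\<lambda>h. (norm x powr e *\<^sub>R a + (e * (a \<bullet> x) * norm x powr (e - 2)) *\<^sub>R x) \<bullet> h)) (at x)"
  using has_derivative_mult[OF has_derivative_inner_right[OF has_derivative_ident]
      has_derivative_norm_powr[OF assms]]
  by (simp add: algebra_simps)

(* Quotients by radial factors are rewritten as negative powers, so that the rule above applies.
   Both identities also hold at the origin, since 0 powr e = 0 and c / 0 = 0. *)
lemma divide_powr_eq_times_powr: "c / t powr e = c * t powr (- e)" for c t e :: real
  by (simp add: powr_minus divide_inverse)

lemma divide_norm_eq_powr: "c / norm y = c * norm y powr (-1)"
  using divide_powr_eq_times_powr[of c "norm y" 1] by simp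

(* Negative half-integer powers of r > 0 are powers of 1/sqrt r; this turns the final
   cancellation into an identity between rational functions of sqrt r. *)
lemma powr_neg_half_multiple:
  fixes r :: real
  assumes "r > 0"
  shows "r powr (- (real k / 2)) = 1 / sqrt r ^ k"
proof -
  have "r powr (real k / 2) = (r powr (1/2)) powr real k"
    by (simp add: powr_powr)
  also have "\<dots> = sqrt r ^ k"
    using assms by (simp add: powr_half_sqrt powr_realpow)
  finally show ?thesis
    by (simp add: powr_minus_divide)
qed

lemma cross3_cross3: "cross3 a (cross3 b c) = (a \<bullet> c) *\<^sub>R b - (a \<bullet> b) *\<^sub>R c"
  for a b c :: "real^3"
  by (simp add: cross3_simps forall_3)

lemma triple_product_cycle: "a \<bullet> cross3 b c = b \<bullet> cross3 c a"
  for a b c :: "real^3"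
  by (simp add: cross3_simps)

lemma Ham_gradient_position:
  assumes "x \<noteq> 0"
  shows "((\<lambda>y. Ham M q Q y p) has_derivative
           (\<lambda>h. ((- q * Q * norm x powr (-3)) *\<^sub>R x) \<bullet> h)) (at x)"
proof -
  have "(\<lambda>y. Ham M q Q y p) = (\<lambda>y. (p \<bullet> p) / (2 * M) + q * Q * norm y powr (-1))"
    by (simp only: Ham_def divide_norm_eq_powr[of "q * Q"])
  moreover have "((\<lambda>y. (p \<bullet> p) / (2 * M) + q * Q * norm y powr (-1)) has_derivative
           (\<lambda>h. 0 + q * Q * (-1 * norm x powr (-1 - 2) * (x \<bullet> h)))) (at x)"
    by (intro has_derivative_add has_derivative_const has_derivative_mult_right
        has_derivative_norm_powr assms)
  ultimately show ?thesis
    by (simp add: mult.assoc)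
qed

lemma Ham_gradient_momentum:
  "((\<lambda>u. Ham M q Q x u) has_derivative (\<lambda>h. (p /\<^sub>R M) \<bullet> h)) (at p)"
proof -
  have deriv: "((\<lambda>u. (u \<bullet> u) * inverse (2 * M) + q * Q * inverse (norm x)) has_derivative
      (\<lambda>h. (p \<bullet> h + h \<bullet> p) * inverse (2 * M) + 0)) (at p)"
    by (intro has_derivative_add has_derivative_mult_left has_derivative_inner
        has_derivative_ident has_derivative_const)
  have rhs: "(p \<bullet> h + h \<bullet> p) * inverse (2 * M) + 0 = (p /\<^sub>R M) \<bullet> h" for h
    by (simp add: inner_commute[of h p])
  show ?thesis
    unfolding Ham_def divide_inverse using deriv by (rule has_derivative_eq_rhs) (rule ext, rule rhs)
qed

lemma bracket_with_Ham:
  assumes "x \<noteq> 0"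
    and "((\<lambda>y. P y p) has_derivative (\<lambda>h. Px \<bullet> h)) (at x)"
    and "((\<lambda>u. P x u) has_derivative (\<lambda>h. Pp \<bullet> h)) (at p)"
  shows "pbracket q g P (Ham M q Q) x p = (Px \<bullet> p) / M + q * Q * norm x powr (-3) * (Pp \<bullet> x)
           + q * g * norm x powr (-5/2) / M * (x \<bullet> cross3 Pp p)"
  using pbracket_from_gradients[OF assms(2,3) Ham_gradient_position[OF assms(1)] Ham_gradient_momentum]
  unfolding Bfield_def divide_powr_eq_times_powr
  by (simp add: cross_mult_right inner_commute field_simps)

(* K written through inner products and radial powers: by BAC-CAB,
   n \<bullet> (\<Pi> \<times> (x \<times> \<Pi>)) = (n \<bullet> x)|\<Pi>|^2 - (n \<bullet> \<Pi>)(x \<bullet> \<Pi>), and the two radial terms of K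
   combine into one term proportional to n \<bullet> x / |x|. *)
lemma Kfun_expanded:
  "Kfun M q Q g n y u = (n \<bullet> y) * (u \<bullet> u) - (n \<bullet> u) * (y \<bullet> u)
     + (M * q * Q - 2 * g^2 * q^2) * ((n \<bullet> y) * norm y powr (-1))
     + 2 * g * q * ((n \<bullet> cross3 y u) * norm y powr (-1/2))"
  unfolding Kfun_def K2vec_def Lmom_def cross3_cross3
  by (simp only: divide_norm_eq_powr divide_powr_eq_times_powr inner_add_right inner_diff_right
      inner_scaleR_right) (simp add: inner_commute algebra_simps)

lemma Kfun_gradient_position:
  assumes "x \<noteq> 0"
  shows "((\<lambda>y. Kfun M q Q g n y p) has_derivative (\<lambda>h.
     ((p \<bullet> p) *\<^sub>R n - (n \<bullet> p) *\<^sub>R p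
      + (M * q * Q - 2 * g^2 * q^2) *\<^sub>R
          (norm x powr (-1) *\<^sub>R n - ((n \<bullet> x) * norm x powr (-3)) *\<^sub>R x)
      + (2 * g * q) *\<^sub>R
          (norm x powr (-1/2) *\<^sub>R cross3 p n - (cross3 p n \<bullet> x * norm x powr (-5/2) / 2) *\<^sub>R x))
     \<bullet> h)) (at x)"
proof -
  have "(\<lambda>y. Kfun M q Q g n y p) = (\<lambda>y. ((p \<bullet> p) *\<^sub>R n - (n \<bullet> p) *\<^sub>R p) \<bullet> y
      + (M * q * Q - 2 * g^2 * q^2) * ((n \<bullet> y) * norm y powr (-1))
      + 2 * g * q * ((cross3 p n \<bullet> y) * norm y powr (-1/2)))"
    by (simp add: fun_eq_iff Kfun_expanded triple_product_cycle[of n] inner_commute algebra_simps)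
  moreover have "((\<lambda>y. ((p \<bullet> p) *\<^sub>R n - (n \<bullet> p) *\<^sub>R p) \<bullet> y
      + (M * q * Q - 2 * g^2 * q^2) * ((n \<bullet> y) * norm y powr (-1))
      + 2 * g * q * ((cross3 p n \<bullet> y) * norm y powr (-1/2))) has_derivative (\<lambda>h.
      ((p \<bullet> p) *\<^sub>R n - (n \<bullet> p) *\<^sub>R p) \<bullet> h
      + (M * q * Q - 2 * g^2 * q^2) * ((norm x powr (-1) *\<^sub>R n
          + (-1 * (n \<bullet> x) * norm x powr (-1 - 2)) *\<^sub>R x) \<bullet> h)
      + 2 * g * q * ((norm x powr (-1/2) *\<^sub>R cross3 p n
          + (-1/2 * (cross3 p n \<bullet> x) * norm x powr (-1/2 - 2)) *\<^sub>R x) \<bullet> h))) (at x)"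
    by (intro has_derivative_add has_derivative_mult_right has_derivative_inner_right
        has_derivative_ident has_derivative_inner_norm_powr assms)
  ultimately show ?thesis
    by (simp add: algebra_simps)
qed

lemma Kfun_gradient_momentum:
  "((\<lambda>u. Kfun M q Q g n x u) has_derivative (\<lambda>h.
     ((2 * (n \<bullet> x)) *\<^sub>R p - (x \<bullet> p) *\<^sub>R n - (n \<bullet> p) *\<^sub>R x
      + (2 * g * q * norm x powr (-1/2)) *\<^sub>R cross3 n x) \<bullet> h)) (at p)"
proof -
  have "(\<lambda>u. Kfun M q Q g n x u) = (\<lambda>u. (n \<bullet> x) * (u \<bullet> u) - (n \<bullet> u) * (x \<bullet> u)
      + (M * q * Q - 2 * g^2 * q^2) * ((n \<bullet> x) * norm x powr (-1))
      + 2 * g * q * norm x powr (-1/2) * (cross3 n x \<bullet> u))"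
    by (simp add: fun_eq_iff Kfun_expanded triple_product_cycle[of _ n x] inner_commute algebra_simps)
  moreover have "((\<lambda>u. (n \<bullet> x) * (u \<bullet> u) - (n \<bullet> u) * (x \<bullet> u)
      + (M * q * Q - 2 * g^2 * q^2) * ((n \<bullet> x) * norm x powr (-1))
      + 2 * g * q * norm x powr (-1/2) * (cross3 n x \<bullet> u)) has_derivative (\<lambda>h.
      (n \<bullet> x) * (p \<bullet> h + h \<bullet> p) - ((n \<bullet> p) * (x \<bullet> h) + (n \<bullet> h) * (x \<bullet> p))
      + 0 + 2 * g * q * norm x powr (-1/2) * (cross3 n x \<bullet> h))) (at p)"
    by (intro has_derivative_add has_derivative_diff has_derivative_mult_right has_derivative_mult
        has_derivative_inner has_derivative_inner_right has_derivative_ident has_derivative_const)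
  ultimately show ?thesis
    by (simp add: inner_commute algebra_simps)
qed

lemma bracket_K_H_expanded:
  fixes x p n :: "real^3"
  assumes "x \<noteq> 0"
  defines "\<tau> \<equiv> n \<bullet> cross3 x p"
  shows "pbracket q g (Kfun M q Q g n) (Ham M q Q) x p =
      ((M * q * Q - 2 * g^2 * q^2) * (norm x powr (-1) * (n \<bullet> p) - (n \<bullet> x) * norm x powr (-3) * (x \<bullet> p))
        - g * q * \<tau> * norm x powr (-5/2) * (x \<bullet> p)) / M
    + q * Q * norm x powr (-3) * ((n \<bullet> x) * (x \<bullet> p) - (n \<bullet> p) * (x \<bullet> x))
    + q * g * norm x powr (-5/2) / M
        * ((x \<bullet> p) * \<tau> + 2 * g * q * norm x powr (-1/2) * ((n \<bullet> p) * (x \<bullet> x) - (n \<bullet> x) * (x \<bullet> p)))"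
proof -
  have x_pn: "x \<bullet> cross3 p n = \<tau>"
    unfolding \<tau>_def using triple_product_cycle[of n x p] by simp
  have x_np: "x \<bullet> cross3 n p = - \<tau>"
    unfolding \<tau>_def using triple_product_cycle[of x n p] by (simp add: cross_skew[of p x])
  have x_nxp: "x \<bullet> cross3 (cross3 n x) p = (n \<bullet> p) * (x \<bullet> x) - (n \<bullet> x) * (x \<bullet> p)"
    using triple_product_cycle[of x "cross3 n x" p] dot_cross[of n x p x] by (simp add: inner_commute)
  show ?thesis
    unfolding bracket_with_Ham[OF assms(1) Kfun_gradient_position[OF assms(1)] Kfun_gradient_momentum]
    by (simp add: cross_add_left Cross3.left_diff_distrib cross_mult_left
        dot_cross_self x_pn x_np x_nxp inner_commute algebra_simps)
qed

(* Main theorem: after writing all radial powers through s = sqrt|x| and |x|^2 = s^4, the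
   expanded bracket is a rational function of s that vanishes identically. *)
theorem mainTheorem2:
  fixes M q Q g :: real and n x p :: "real^3"
  assumes "M > 0" and "x \<noteq> 0"
  shows "pbracket q g (Kfun M q Q g n) (Ham M q Q) x p = 0"
proof -
  define s where "s = sqrt (norm x)"
  have r_pos: "norm x > 0" and s_pos: "s > 0"
    using assms(2) by (auto simp: s_def)
  have powers: "norm x powr (-1) = 1 / s^2" "norm x powr (-3) = 1 / s^6"
      "norm x powr (-1/2) = 1 / s" "norm x powr (-5/2) = 1 / s^5"
    using powr_neg_half_multiple[OF r_pos, of 2] powr_neg_half_multiple[OF r_pos, of 6]
      powr_neg_half_multiple[OF r_pos, of 1] powr_neg_half_multiple[OF r_pos, of 5]
    by (simp_all add: s_def)
  have "x \<bullet> x = (s^2)^2"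
    using r_pos by (simp add: s_def power2_norm_eq_inner)
  then have xx: "x \<bullet> x = s^4"
    by simp
  show ?thesis
    unfolding bracket_K_H_expanded[OF assms(2)] powers xx
    using assms(1) s_pos by (simp add: field_simps) algebra
qed

end
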